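(* Let $T,\nu,M_t$ be integers with $M_t\ge1$, $\nu\ge0$, and $T>(\nu+1)M_t$; let $\alpha$ be a primitive element of $\mathbb{F}_{2^T}$ and fix $\mathbf{c}\in\mathbb{F}_{2^T}^{M_t\times1}$. If $\mathbf{g}^{(1)},\dots,\mathbf{g}^{(d)}\in\mathcal{G}$ are such that $\Phi(\mathbf{g}^{(1)}),\dots,\Phi(\mathbf{g}^{(d)})$ are linearly independent over $\mathbb{F}_2$, then $\mathbf{g}^{(1)},\dots,\mathbf{g}^{(d)}$ are linearly independent over $\mathbb{F}_{2^T}$.
   Context: $\Gamma=\{\sum_{t=0}^{\nu}\delta_t\alpha^t:\delta_t\in\mathbb{F}_2\}\subseteq\mathbb{F}_{2^T}$. For $\mathbf{g}=[g_0,\dots,g_{M_t-1}]\in\Gamma^{1\times M_t}$ with $g_k=\sum_{j=0}^{\nu}\delta_{k,j}\alpha^j$, $\Phi(\mathbf{g})=[\delta_{0,0},\dots,\delta_{M_t-1,0}]\in\mathbb{F}_2^{1\times M_t}$. $\mathcal{G}=\{\mathbf{g}\in\Gamma^{1\times M_t}:\mathbf{g}\mathbf{c}=0\}$. *)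

theory Defs
  imports Main
begin

text \<open>The field F_(2^T) is an abstract finite field type 'a with CARD('a) = 2^T.
  The prime subfield F_2 is identified with the subset {0,1} of 'a.
  Row vectors of length Mt are functions nat => 'a, only indices k < Mt matter.\<close>

definition primitive_elem :: "'a::{field,finite} \<Rightarrow> bool" where
  "primitive_elem \<alpha> \<longleftrightarrow> \<alpha> \<noteq> 0 \<and> (\<forall>x. x \<noteq> 0 \<longrightarrow> (\<exists>n::nat. x = \<alpha> ^ n))"

definition Gamma :: "nat \<Rightarrow> 'a::field \<Rightarrow> 'a set" where
  "Gamma \<nu> \<alpha> = {(\<Sum>t\<le>\<nu>. \<delta> t * \<alpha> ^ t) | \<delta>. \<forall>t. \<delta> t \<in> {0, 1}}"

definition Phi :: "nat \<Rightarrow> 'a::field \<Rightarrow> (nat \<Rightarrow> 'a) \<Rightarrow> (nat \<Rightarrow> 'a)" where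
  "Phi \<nu> \<alpha> g = (\<lambda>k. THE b. \<exists>\<delta>. (\<forall>t. \<delta> t \<in> {0, 1}) \<and> \<delta> 0 = b \<and>
                                 g k = (\<Sum>t\<le>\<nu>. \<delta> t * \<alpha> ^ t))"

definition calG :: "nat \<Rightarrow> nat \<Rightarrow> 'a::field \<Rightarrow> (nat \<Rightarrow> 'a) \<Rightarrow> (nat \<Rightarrow> 'a) set" where
  "calG Mt \<nu> \<alpha> c = {g. (\<forall>k<Mt. g k \<in> Gamma \<nu> \<alpha>) \<and> (\<Sum>k<Mt. g k * c k) = 0}"

text \<open>Linear independence of the family v_0..v_(d-1) of length-Mt vectors,
  with coefficients ranging over the set K (K = {0,1} for F_2, K = UNIV for F_(2^T)).\<close>
definition lin_indep_over :: "'a::field set \<Rightarrow> nat \<Rightarrow> nat \<Rightarrow> (nat \<Rightarrow> nat \<Rightarrow> 'a) \<Rightarrow> bool" where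
  "lin_indep_over K Mt d v \<longleftrightarrow>
     (\<forall>a. (\<forall>i<d. a i \<in> K) \<and> (\<forall>k<Mt. (\<Sum>i<d. a i * v i k) = 0) \<longrightarrow> (\<forall>i<d. a i = 0))"

end

theory Submission
  imports Defs "HOL-Computational_Algebra.Polynomial" "HOL-Library.FuncSet"
begin

text \<open>
  Since \<open>\<alpha>\<close> is primitive in a field with \<open>2^T\<close> elements, reducing the powers of \<open>\<alpha>\<close> modulo a
  binary polynomial with root \<open>\<alpha>\<close> shows that the values at \<open>\<alpha>\<close> of binary polynomials of smaller
  degree exhaust the field; counting them, every nonzero binary polynomial vanishing at \<open>\<alpha>\<close> has
  degree at least \<open>T\<close>. Write the entries of \<open>g\<^sub>i\<close> as \<open>p\<^sub>i\<^sub>k(\<alpha>)\<close> with \<open>p\<^sub>i\<^sub>k\<close> binary of degree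
  \<open>\<le> \<nu>\<close>, so that \<open>\<Phi>(g\<^sub>i)\<^sub>k = p\<^sub>i\<^sub>k(0)\<close>. Given a nontrivial relation \<open>\<Sum> a\<^sub>i g\<^sub>i = 0\<close>, a
  pigeonhole argument (possible because \<open>d \<le> M\<^sub>t\<close>, hence \<open>d \<nu> < T\<close>) yields binary polynomials
  \<open>b\<^sub>i\<close> of degree \<open>< T - \<nu>\<close>, not all zero, whose values at \<open>\<alpha>\<close> are proportional to the \<open>a\<^sub>i\<close>.
  Then each \<open>\<Sum> b\<^sub>i p\<^sub>i\<^sub>k\<close> is binary of degree \<open>< T\<close> and vanishes at \<open>\<alpha>\<close>, so it is zero, and its
  coefficient at the lowest degree where some \<open>b\<^sub>i\<close> is nonzero is a nontrivial \<open>\<bbbF>\<^sub>2\<close>-relation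
  between the \<open>\<Phi>(g\<^sub>i)\<close>.
\<close>

lemma one_add_one_eq_zero_if_card_two_power:
  assumes "card (UNIV :: 'a::{field,finite} set) = 2 ^ T" and "T \<ge> 1"
  shows "(1::'a) + 1 = 0"
proof -
  have "(\<Sum>x\<in>(UNIV::'a set). x) = (\<Sum>x\<in>UNIV. x + 1)"
    by (rule sum.reindex_bij_witness[where i="\<lambda>x. x + 1" and j="\<lambda>x. x - 1"]) auto
  also have "\<dots> = (\<Sum>x\<in>UNIV. x) + of_nat (card (UNIV::'a set))"
    by (simp add: sum.distrib)
  finally have "(of_nat 2 :: 'a) ^ T = 0"
    using assms(1) by (simp add: of_nat_power)
  hence "(of_nat 2 :: 'a) = 0"
    using assms(2) by simp
  thus ?thesis
    by (simp add: one_add_one)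
qed

lemma add_in_zero_one:
  "(1::'a::field) + 1 = 0 \<Longrightarrow> x \<in> {0,1} \<Longrightarrow> y \<in> {0,1} \<Longrightarrow> x + y \<in> {0,1::'a}"
  by auto

lemma diff_in_zero_one:
  assumes "(1::'a::field) + 1 = 0" and "x \<in> {0,1}" "y \<in> {0,1}"
  shows "x - y \<in> {0,1::'a}"
proof -
  have "-(1::'a) = 1"
    using assms(1) by (metis add.inverse_unique)
  thus ?thesis
    using assms(2,3) by auto
qed

lemma mult_in_zero_one: "x \<in> {0,1} \<Longrightarrow> y \<in> {0,1} \<Longrightarrow> x * y \<in> {0,1::'a::field}"
  by auto

lemma sum_in_zero_one:
  "(1::'a::field) + 1 = 0 \<Longrightarrow> (\<And>i. i \<in> A \<Longrightarrow> f i \<in> {0,1}) \<Longrightarrow> sum f A \<in> {0,1::'a}"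
proof (induction A rule: infinite_finite_induct)
  case (insert x F)
  then show ?case
    using add_in_zero_one[of "f x" "sum f F"] by auto
qed auto

definition binary_poly :: "'a::field poly \<Rightarrow> bool" where
  "binary_poly p \<longleftrightarrow> (\<forall>t. coeff p t \<in> {0,1})"

lemma binary_poly_diff:
  "(1::'a::field) + 1 = 0 \<Longrightarrow> binary_poly p \<Longrightarrow> binary_poly q \<Longrightarrow> binary_poly (p - q :: 'a poly)"
  unfolding binary_poly_def coeff_diff by (intro allI diff_in_zero_one) auto

lemma binary_poly_mult:
  assumes "(1::'a::field) + 1 = 0" and "binary_poly p" "binary_poly q"
  shows "binary_poly (p * q :: 'a poly)"
proof -
  have "coeff p i * coeff q j \<in> {0,1}" for i j
    using assms(2,3) unfolding binary_poly_def by (intro mult_in_zero_one) blast+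
  thus ?thesis
    unfolding binary_poly_def coeff_mult by (intro allI sum_in_zero_one[OF assms(1)])
qed

lemma binary_poly_sum:
  "(1::'a::field) + 1 = 0 \<Longrightarrow> (\<And>i. i \<in> A \<Longrightarrow> binary_poly (f i)) \<Longrightarrow> binary_poly (sum f A :: 'a poly)"
  unfolding binary_poly_def coeff_sum by (intro allI sum_in_zero_one) auto

definition poly_of_bits :: "(nat \<Rightarrow> 'a::comm_monoid_add) \<Rightarrow> nat \<Rightarrow> 'a poly" where
  "poly_of_bits \<delta> n = (\<Sum>t<n. monom (\<delta> t) t)"

lemma coeff_poly_of_bits: "coeff (poly_of_bits \<delta> n) t = (if t < n then \<delta> t else 0)"
  by (simp add: poly_of_bits_def coeff_sum coeff_monom)

lemma poly_poly_of_bits: "poly (poly_of_bits \<delta> n) x = (\<Sum>t<n. \<delta> t * x ^ t)"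
  for x :: "'a::comm_semiring_1"
  by (simp add: poly_of_bits_def poly_sum poly_monom)

lemma degree_poly_of_bits_less: "n > 0 \<Longrightarrow> degree (poly_of_bits \<delta> n) < n"
  by (rule degree_lessI) (auto simp: coeff_poly_of_bits)

lemma binary_poly_of_bits: "(\<And>t. t < n \<Longrightarrow> \<delta> t \<in> {0,1}) \<Longrightarrow> binary_poly (poly_of_bits \<delta> n)"
  by (simp add: binary_poly_def coeff_poly_of_bits)

lemma poly_of_bits_coeff: "degree p < n \<Longrightarrow> poly_of_bits (coeff p) n = p"
  by (simp add: poly_eq_iff coeff_poly_of_bits coeff_eq_0)

definition binary_values :: "'a::field \<Rightarrow> nat \<Rightarrow> 'a set" where
  "binary_values \<alpha> m = {poly q \<alpha> | q. binary_poly q \<and> degree q < m}"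

lemma card_binary_values_le: "card (binary_values (\<alpha>::'a::{field,finite}) m) \<le> 2 ^ m"
proof -
  let ?bits = "PiE {..<m} (\<lambda>_. {0,1::'a})"
  have "binary_values \<alpha> m \<subseteq> (\<lambda>\<delta>. poly (poly_of_bits \<delta> m) \<alpha>) ` ?bits"
  proof
    fix x assume "x \<in> binary_values \<alpha> m"
    then obtain q where q: "binary_poly q" "degree q < m" "x = poly q \<alpha>"
      unfolding binary_values_def by auto
    have eq: "poly_of_bits (restrict (coeff q) {..<m}) m = q"
      using poly_of_bits_coeff[OF q(2)] by (simp add: poly_of_bits_def)
    have bits: "restrict (coeff q) {..<m} \<in> ?bits"
      using q(1) unfolding binary_poly_def by auto
    show "x \<in> (\<lambda>\<delta>. poly (poly_of_bits \<delta> m) \<alpha>) ` ?bits"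
      by (rule image_eqI[OF _ bits]) (simp add: eq q(3))
  qed
  hence "card (binary_values \<alpha> m) \<le> card ((\<lambda>\<delta>. poly (poly_of_bits \<delta> m) \<alpha>) ` ?bits)"
    by (intro card_mono) simp_all
  also have "\<dots> \<le> card ?bits"
    by (rule card_image_le) (simp add: finite_PiE)
  also have "\<dots> = 2 ^ m"
    by (simp add: card_PiE numeral_2_eq_2)
  finally show ?thesis .
qed

lemma binary_poly_lead_coeff: "binary_poly p \<Longrightarrow> p \<noteq> 0 \<Longrightarrow> lead_coeff p = 1"
  unfolding binary_poly_def by (metis empty_iff insert_iff leading_coeff_0_iff)

lemma power_in_binary_values:
  fixes \<alpha> :: "'a::field"
  assumes c2: "(1::'a) + 1 = 0" and p: "binary_poly p" "degree p \<ge> 1" and root: "poly p \<alpha> = 0"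
  shows "\<alpha> ^ n \<in> binary_values \<alpha> (degree p)"
proof (induction n)
  case 0
  have "binary_poly (1::'a poly)"
    by (auto simp: binary_poly_def coeff_1)
  then show ?case
    using p(2) unfolding binary_values_def by force
next
  case (Suc n)
  define m where "m = degree p"
  obtain q where q: "binary_poly q" "degree q < m" "\<alpha> ^ n = poly q \<alpha>"
    using Suc unfolding binary_values_def m_def by auto
  have lead: "coeff p m = 1"
    using p binary_poly_lead_coeff unfolding m_def by fastforce
  \<comment> \<open>reduce \<open>\<alpha> * q\<close> modulo \<open>p\<close>: cancel its possible \<open>m\<close>-th coefficient\<close>
  define c where "c = coeff q (m - 1)"
  define r where "r = pCons 0 q - smult c p"
  have "binary_poly (pCons 0 q)"
    using q(1) unfolding binary_poly_def by (auto simp: coeff_pCons split: nat.split)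
  moreover have "binary_poly (smult c p)"
    using p(1) q(1) unfolding binary_poly_def coeff_smult c_def by (intro allI mult_in_zero_one) auto
  ultimately have "binary_poly r"
    unfolding r_def by (rule binary_poly_diff[OF c2])
  moreover have "degree r < m"
  proof (rule degree_lessI)
    show "\<forall>t\<ge>m. coeff r t = 0"
    proof (intro allI impI)
      fix t assume "t \<ge> m"
      then consider "t = m" | "t > m" by linarith
      then show "coeff r t = 0"
      proof cases
        case 1
        then show ?thesis
          using p(2) lead unfolding r_def c_def m_def by (auto simp: coeff_pCons split: nat.split)
      next
        case 2
        then show ?thesis
          using q(2) unfolding r_def m_def by (cases t) (auto simp: coeff_pCons coeff_eq_0)
      qed
    qed
  qed (use p(2) m_def in simp)
  moreover have "poly r \<alpha> = \<alpha> ^ Suc n"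
    unfolding r_def using root q(3) by simp
  ultimately show ?case
    unfolding binary_values_def m_def by force
qed

lemma binary_poly_root_degree_ge:
  fixes \<alpha> :: "'a::{field,finite}"
  assumes c2: "(1::'a) + 1 = 0" and card: "card (UNIV :: 'a set) = 2 ^ T"
    and prim: "primitive_elem \<alpha>" and p: "binary_poly p" "p \<noteq> 0" and root: "poly p \<alpha> = 0"
  shows "T \<le> degree p"
proof -
  have "degree p \<ge> 1"
  proof (rule ccontr)
    assume "\<not> degree p \<ge> 1"
    hence "degree p = 0"
      by simp
    hence "poly p \<alpha> = coeff p (degree p)"
      by (simp add: poly_altdef)
    moreover have "coeff p (degree p) = 1"
      using p by (rule binary_poly_lead_coeff)
    ultimately show False
      using root by simp
  qed
  have "UNIV \<subseteq> binary_values \<alpha> (degree p)"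
  proof
    fix x :: 'a
    show "x \<in> binary_values \<alpha> (degree p)"
    proof (cases "x = 0")
      case True
      have "binary_poly (0::'a poly)"
        by (simp add: binary_poly_def)
      then show ?thesis
        using True \<open>degree p \<ge> 1\<close> unfolding binary_values_def by force
    next
      case False
      then obtain n where "x = \<alpha> ^ n"
        using prim unfolding primitive_elem_def by blast
      then show ?thesis
        using power_in_binary_values[OF c2 p(1) \<open>degree p \<ge> 1\<close> root] by simp
    qed
  qed
  hence "card (UNIV :: 'a set) \<le> card (binary_values \<alpha> (degree p))"
    by (intro card_mono) simp_all
  also have "\<dots> \<le> 2 ^ degree p"
    by (rule card_binary_values_le)
  finally have "(2::nat) ^ T \<le> 2 ^ degree p"
    using card by simp
  thus ?thesis
    by simp
qed

lemma binary_poly_eq_0_if_root: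
  fixes \<alpha> :: "'a::{field,finite}"
  assumes "(1::'a) + 1 = 0" and "card (UNIV :: 'a set) = 2 ^ T" and "primitive_elem \<alpha>"
    and "binary_poly p" "degree p < T" "poly p \<alpha> = 0"
  shows "p = 0"
  using binary_poly_root_degree_ge[OF assms(1-4)] assms(5,6) by linarith

lemma binary_poly_eq_if_poly_eq:
  fixes \<alpha> :: "'a::{field,finite}"
  assumes c2: "(1::'a) + 1 = 0" and card: "card (UNIV :: 'a set) = 2 ^ T"
    and prim: "primitive_elem \<alpha>" and "binary_poly p" "binary_poly q" "degree p < T" "degree q < T"
    and "poly p \<alpha> = poly q \<alpha>"
  shows "p = q"
proof -
  have "degree (p - q) < T"
    using degree_diff_le_max[of p q] assms(6,7) by linarith
  hence "p - q = 0"
    using assms binary_poly_diff[OF c2] by (intro binary_poly_eq_0_if_root[OF c2 card prim]) auto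
  thus ?thesis
    by simp
qed

lemma Gamma_imp_binary_poly:
  assumes "x \<in> Gamma \<nu> \<alpha>"
  obtains q where "binary_poly q" "degree q \<le> \<nu>" "poly q \<alpha> = x"
proof -
  obtain \<delta> where \<delta>: "\<forall>t. \<delta> t \<in> {0,1}" "x = (\<Sum>t\<le>\<nu>. \<delta> t * \<alpha> ^ t)"
    using assms unfolding Gamma_def by blast
  show thesis
  proof (rule that)
    show "binary_poly (poly_of_bits \<delta> (Suc \<nu>))"
      using \<delta>(1) by (intro binary_poly_of_bits) blast
    show "degree (poly_of_bits \<delta> (Suc \<nu>)) \<le> \<nu>"
      using degree_poly_of_bits_less[of "Suc \<nu>" \<delta>] by simp
    show "poly (poly_of_bits \<delta> (Suc \<nu>)) \<alpha> = x"
      using \<delta>(2) by (simp add: poly_poly_of_bits lessThan_Suc_atMost)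
  qed
qed

lemma Phi_eq_coeff_0:
  fixes \<alpha> :: "'a::{field,finite}"
  assumes c2: "(1::'a) + 1 = 0" and card: "card (UNIV :: 'a set) = 2 ^ T"
    and prim: "primitive_elem \<alpha>" and "\<nu> < T"
    and q: "binary_poly q" "degree q \<le> \<nu>" "poly q \<alpha> = g k"
  shows "Phi \<nu> \<alpha> g k = coeff q 0"
  unfolding Phi_def
proof (rule the_equality)
  have "g k = (\<Sum>t\<le>\<nu>. coeff q t * \<alpha> ^ t)"
    using q(2,3) poly_poly_of_bits[of "coeff q" "Suc \<nu>" \<alpha>] poly_of_bits_coeff[of q "Suc \<nu>"]
    by (simp add: lessThan_Suc_atMost)
  then show "\<exists>\<delta>. (\<forall>t. \<delta> t \<in> {0, 1}) \<and> \<delta> 0 = coeff q 0 \<and> g k = (\<Sum>t\<le>\<nu>. \<delta> t * \<alpha> ^ t)"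
    using q(1) unfolding binary_poly_def by blast
next
  fix b
  assume "\<exists>\<delta>. (\<forall>t. \<delta> t \<in> {0, 1}) \<and> \<delta> 0 = b \<and> g k = (\<Sum>t\<le>\<nu>. \<delta> t * \<alpha> ^ t)"
  then obtain \<delta> where \<delta>: "\<forall>t. \<delta> t \<in> {0, 1}" "\<delta> 0 = b" "g k = (\<Sum>t\<le>\<nu>. \<delta> t * \<alpha> ^ t)"
    by blast
  have "poly_of_bits \<delta> (Suc \<nu>) = q"
  proof (rule binary_poly_eq_if_poly_eq[OF c2 card prim])
    show "binary_poly (poly_of_bits \<delta> (Suc \<nu>))"
      using \<delta>(1) by (intro binary_poly_of_bits) blast
    show "degree (poly_of_bits \<delta> (Suc \<nu>)) < T"
      using degree_poly_of_bits_less[of "Suc \<nu>" \<delta>] \<open>\<nu> < T\<close> by simp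
    show "poly (poly_of_bits \<delta> (Suc \<nu>)) \<alpha> = poly q \<alpha>"
      using \<delta>(3) q(3) by (simp add: poly_poly_of_bits lessThan_Suc_atMost)
  qed (use q \<open>\<nu> < T\<close> in auto)
  then show "b = coeff q 0"
    using \<delta>(2) by (auto simp: coeff_poly_of_bits)
qed

lemma lin_indep_over_cong:
  "(\<And>i k. i < d \<Longrightarrow> k < Mt \<Longrightarrow> v i k = w i k) \<Longrightarrow> lin_indep_over K Mt d v = lin_indep_over K Mt d w"
proof -
  assume "\<And>i k. i < d \<Longrightarrow> k < Mt \<Longrightarrow> v i k = w i k"
  hence "k < Mt \<Longrightarrow> (\<Sum>i<d. a i * v i k) = (\<Sum>i<d. a i * w i k)" for a k
    by (intro sum.cong) auto
  then show ?thesis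
    unfolding lin_indep_over_def by simp
qed

lemma lin_indep_overD:
  assumes "lin_indep_over K Mt d v" and "\<And>i. i < d \<Longrightarrow> a i \<in> K"
    and "\<And>k. k < Mt \<Longrightarrow> (\<Sum>i<d. a i * v i k) = 0" and "i < d"
  shows "a i = 0"
  using assms unfolding lin_indep_over_def by blast

lemma lin_indep_over_binary_le:
  fixes v :: "nat \<Rightarrow> nat \<Rightarrow> 'a::field"
  assumes c2: "(1::'a) + 1 = 0" and v: "\<forall>i<d. \<forall>k<Mt. v i k \<in> {0,1}"
    and indep: "lin_indep_over {0,1} Mt d v"
  shows "d \<le> Mt"
proof -
  define f where "f a = restrict (\<lambda>k. \<Sum>i<d. a i * v i k) {..<Mt}" for a :: "nat \<Rightarrow> 'a"
  have "inj_on f (PiE {..<d} (\<lambda>_. {0,1}))"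
  proof (rule inj_onI)
    fix a a'
    assume a: "a \<in> PiE {..<d} (\<lambda>_. {0,1})" and a': "a' \<in> PiE {..<d} (\<lambda>_. {0,1})" and "f a = f a'"
    have "(\<Sum>i<d. (a i - a' i) * v i k) = 0" if "k < Mt" for k
      using fun_cong[OF \<open>f a = f a'\<close>, of k] that
      by (simp add: f_def left_diff_distrib sum_subtractf)
    moreover have "a i - a' i \<in> {0,1}" if "i < d" for i
      using a a' that by (intro diff_in_zero_one[OF c2]) auto
    ultimately have "a i - a' i = 0" if "i < d" for i
      using lin_indep_overD[OF indep, of "\<lambda>i. a i - a' i"] that by blast
    then show "a = a'"
      using a a' by (intro PiE_ext) auto
  qed
  moreover have "f a \<in> PiE {..<Mt} (\<lambda>_. {0,1})" if a: "a \<in> PiE {..<d} (\<lambda>_. {0,1})" for a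
    unfolding f_def
  proof (rule restrict_PiE_iff[THEN iffD2], intro ballI)
    fix k assume "k \<in> {..<Mt}"
    then show "(\<Sum>i<d. a i * v i k) \<in> {0,1}"
      using a v by (intro sum_in_zero_one[OF c2] mult_in_zero_one) (auto simp: PiE_iff)
  qed
  hence "f ` PiE {..<d} (\<lambda>_. {0,1}) \<subseteq> PiE {..<Mt} (\<lambda>_. {0,1})"
    by blast
  ultimately have "card (PiE {..<d} (\<lambda>_. {0,1::'a})) \<le> card (PiE {..<Mt} (\<lambda>_. {0,1::'a}))"
    by (rule card_inj_on_le) (simp add: finite_PiE)
  hence "(2::nat) ^ d \<le> 2 ^ Mt"
    by (simp add: card_PiE)
  thus ?thesis
    by simp
qed

lemma exists_binary_polys_proportional:
  fixes a :: "nat \<Rightarrow> 'a::{field,finite}" and \<alpha> :: 'a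
  assumes c2: "(1::'a) + 1 = 0" and card: "card (UNIV :: 'a set) = 2 ^ T"
    and j: "j < d" "a j \<noteq> 0" and count: "T * (d - 1) < d * D"
  obtains b lam where "\<forall>i<d. binary_poly (b i) \<and> degree (b i) < D" and "\<exists>i<d. b i \<noteq> 0"
    and "\<forall>i<d. poly (b i) \<alpha> = lam * a i"
proof -
  define bits where "bits = PiE ({..<d} \<times> {..<D}) (\<lambda>_. {0,1::'a})"
  define B where "B \<delta> i = poly_of_bits (\<lambda>t. \<delta> (i, t)) D" for \<delta> :: "nat \<times> nat \<Rightarrow> 'a" and i
  define h where "h \<delta> = restrict (\<lambda>i. poly (B \<delta> i) \<alpha> * a j - poly (B \<delta> j) \<alpha> * a i) ({..<d} - {j})"
    for \<delta>
  \<comment> \<open>\<open>h \<delta>\<^sub>1 = h \<delta>\<^sub>2\<close> says that the values at \<open>\<alpha>\<close> of the \<open>B \<delta>\<^sub>1 i - B \<delta>\<^sub>2 i\<close> are proportional to \<open>a\<close>\<close>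
  have "\<not> inj_on h bits"
  proof
    assume "inj_on h bits"
    moreover have "h ` bits \<subseteq> PiE ({..<d} - {j}) (\<lambda>_. UNIV)"
      unfolding h_def by (intro image_subsetI) (simp add: restrict_PiE_iff)
    ultimately have "card bits \<le> card (PiE ({..<d} - {j}) (\<lambda>_. UNIV :: 'a set))"
      by (rule card_inj_on_le) (simp add: finite_PiE)
    also have "\<dots> = 2 ^ (T * (d - 1))"
      using card j(1) by (simp add: card_PiE power_mult)
    also have "\<dots> < card bits"
      using count by (simp add: bits_def card_PiE card_cartesian_product numeral_2_eq_2[symmetric])
    finally show False
      by simp
  qed
  then obtain \<delta>1 \<delta>2 where \<delta>: "\<delta>1 \<in> bits" "\<delta>2 \<in> bits" "\<delta>1 \<noteq> \<delta>2" "h \<delta>1 = h \<delta>2"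
    unfolding inj_on_def by blast
  define b where "b i = B \<delta>1 i - B \<delta>2 i" for i
  show thesis
  proof (rule that[of b "poly (b j) \<alpha> / a j"])
    have "D \<ge> 1"
      using count by (cases D) auto
    have "binary_poly (B \<delta> i)" if "\<delta> \<in> bits" "i < d" for \<delta> i
      unfolding B_def using that by (intro binary_poly_of_bits) (auto simp: bits_def PiE_iff)
    moreover have "degree (b i) < D" for i
      using \<open>D \<ge> 1\<close> unfolding b_def B_def by (intro degree_diff_less degree_poly_of_bits_less) simp_all
    ultimately show "\<forall>i<d. binary_poly (b i) \<and> degree (b i) < D"
      unfolding b_def using \<delta>(1,2) binary_poly_diff[OF c2] by blast
  next
    obtain x where x: "\<delta>1 x \<noteq> \<delta>2 x"
      using \<delta>(3) by blast
    have "x \<in> {..<d} \<times> {..<D}"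
      using x \<delta>(1,2) unfolding bits_def by (metis PiE_arb)
    then obtain i t where "x = (i, t)" "i < d" "t < D"
      by blast
    then have "coeff (b i) t \<noteq> 0"
      using x by (simp add: b_def B_def coeff_poly_of_bits)
    then show "\<exists>i<d. b i \<noteq> 0"
      using \<open>i < d\<close> by auto
  next
    have "poly (b i) \<alpha> * a j = poly (b j) \<alpha> * a i" if "i < d" for i
    proof (cases "i = j")
      case False
      then have "h \<delta>1 i = h \<delta>2 i"
        using \<delta>(4) by simp
      then show ?thesis
        using False that by (simp add: h_def b_def algebra_simps)
    qed simp
    then show "\<forall>i<d. poly (b i) \<alpha> = poly (b j) \<alpha> / a j * a i"
      using j(2) by (auto simp: field_simps)
  qed
qed

lemma coeff_sum_mult_lowest:
  fixes b p :: "'i \<Rightarrow> 'a::comm_semiring_0 poly"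
  assumes "\<forall>i\<in>I. \<forall>t<m. coeff (b i) t = 0"
  shows "coeff (\<Sum>i\<in>I. b i * p i) m = (\<Sum>i\<in>I. coeff (b i) m * coeff (p i) 0)"
  unfolding coeff_sum
proof (rule sum.cong)
  fix i assume "i \<in> I"
  have "coeff (b i * p i) m = (\<Sum>s<Suc m. coeff (b i) s * coeff (p i) (m - s))"
    by (simp add: coeff_mult lessThan_Suc_atMost)
  also have "\<dots> = coeff (b i) m * coeff (p i) 0"
    using assms \<open>i \<in> I\<close> by simp
  finally show "coeff (b i * p i) m = coeff (b i) m * coeff (p i) 0" .
qed simp

lemma poly_relation_imp_not_lin_indep_over_coeff_0:
  fixes b :: "nat \<Rightarrow> 'a::field poly" and P :: "nat \<Rightarrow> nat \<Rightarrow> 'a poly"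
  assumes b: "\<And>i t. i < d \<Longrightarrow> coeff (b i) t \<in> K" and b_nz: "\<exists>i<d. b i \<noteq> 0"
    and rel: "\<And>k. k < Mt \<Longrightarrow> (\<Sum>i<d. b i * P i k) = 0"
  shows "\<not> lin_indep_over K Mt d (\<lambda>i k. coeff (P i k) 0)"
proof
  assume indep: "lin_indep_over K Mt d (\<lambda>i k. coeff (P i k) 0)"
  obtain i0 where "i0 < d" "b i0 \<noteq> 0"
    using b_nz by blast
  moreover have "coeff (b i0) (degree (b i0)) \<noteq> 0"
    using \<open>b i0 \<noteq> 0\<close> by simp
  ultimately have "\<exists>t. \<exists>i<d. coeff (b i) t \<noteq> 0"
    by blast
  then have "\<exists>m. (\<exists>i<d. coeff (b i) m \<noteq> 0) \<and> (\<forall>t<m. \<not> (\<exists>i<d. coeff (b i) t \<noteq> 0))"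
    by (rule exists_least_iff[THEN iffD1])
  then obtain m where m_nz: "\<exists>i<d. coeff (b i) m \<noteq> 0"
    and m_least: "\<forall>t<m. \<not> (\<exists>i<d. coeff (b i) t \<noteq> 0)"
    by blast
  have "coeff (b i) m = 0" if "i < d" for i
  proof (rule lin_indep_overD[OF indep _ _ that])
    fix k assume "k < Mt"
    have "(\<Sum>i<d. coeff (b i) m * coeff (P i k) 0) = coeff (\<Sum>i<d. b i * P i k) m"
      using m_least by (intro coeff_sum_mult_lowest[symmetric]) blast
    also have "\<dots> = 0"
      using rel[OF \<open>k < Mt\<close>] by simp
    finally show "(\<Sum>i<d. coeff (b i) m * coeff (P i k) 0) = 0" .
  qed (use b in blast)
  then show False
    using m_nz by blast
qed

lemma lin_indep_over_eval_binary_polys: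
  fixes \<alpha> :: "'a::{field,finite}" and P :: "nat \<Rightarrow> nat \<Rightarrow> 'a poly"
  assumes c2: "(1::'a) + 1 = 0" and card: "card (UNIV :: 'a set) = 2 ^ T"
    and prim: "primitive_elem \<alpha>"
    and P: "\<And>i k. i < d \<Longrightarrow> k < Mt \<Longrightarrow> binary_poly (P i k) \<and> degree (P i k) \<le> \<nu>"
    and small: "d * \<nu> < T"
    and indep: "lin_indep_over {0,1} Mt d (\<lambda>i k. coeff (P i k) 0)"
  shows "lin_indep_over UNIV Mt d (\<lambda>i k. poly (P i k) \<alpha>)"
  unfolding lin_indep_over_def
proof (rule allI, rule impI)
  fix a :: "nat \<Rightarrow> 'a"
  assume "(\<forall>i<d. a i \<in> UNIV) \<and> (\<forall>k<Mt. (\<Sum>i<d. a i * poly (P i k) \<alpha>) = 0)"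
  hence rel: "(\<Sum>i<d. a i * poly (P i k) \<alpha>) = 0" if "k < Mt" for k
    using that by blast
  show "\<forall>i<d. a i = 0"
  proof (rule ccontr)
    assume "\<not> (\<forall>i<d. a i = 0)"
    then obtain j where j: "j < d" "a j \<noteq> 0"
      by blast
    have "1 * \<nu> \<le> d * \<nu>"
      using j(1) by (intro mult_le_mono1) simp
    hence "\<nu> < T"
      using small by linarith
    have "T * (d - 1) < d * (T - \<nu>)"
    proof -
      have "d * (T - \<nu>) + d * \<nu> = d * T"
        using \<open>\<nu> < T\<close> by (simp add: add_mult_distrib2[symmetric])
      moreover have "T * (d - 1) + T = d * T"
        using j(1) by (cases d) (simp_all add: algebra_simps)
      ultimately show ?thesis
        using small by linarith
    qed
    then obtain b lam where b: "\<forall>i<d. binary_poly (b i) \<and> degree (b i) < T - \<nu>"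
      and b_nz: "\<exists>i<d. b i \<noteq> 0" and b_prop: "\<forall>i<d. poly (b i) \<alpha> = lam * a i"
      using exists_binary_polys_proportional[OF c2 card j(1), of a, OF j(2)] by blast
    have "(\<Sum>i<d. b i * P i k) = 0" if "k < Mt" for k
    proof (rule binary_poly_eq_0_if_root[OF c2 card prim])
      show "binary_poly (\<Sum>i<d. b i * P i k)"
        using b P that by (intro binary_poly_sum[OF c2] binary_poly_mult[OF c2]) auto
      have "degree (b i * P i k) < T" if "i < d" for i
      proof -
        have "degree (b i) < T - \<nu>" "degree (P i k) \<le> \<nu>"
          using b P \<open>i < d\<close> \<open>k < Mt\<close> by auto
        then show ?thesis
          using degree_mult_le[of "b i" "P i k"] by linarith
      qed
      then show "degree (\<Sum>i<d. b i * P i k) < T"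
        using small by (intro degree_sum_less) auto
      have "poly (\<Sum>i<d. b i * P i k) \<alpha> = lam * (\<Sum>i<d. a i * poly (P i k) \<alpha>)"
        using b_prop by (simp add: poly_sum sum_distrib_left mult.assoc)
      then show "poly (\<Sum>i<d. b i * P i k) \<alpha> = 0"
        using rel[OF that] by simp
    qed
    moreover have "coeff (b i) t \<in> {0,1}" if "i < d" for i t
      using b that unfolding binary_poly_def by blast
    ultimately show False
      using poly_relation_imp_not_lin_indep_over_coeff_0[of d b "{0,1}" Mt P] b_nz indep by blast
  qed
qed

lemma calG_binary_poly_representation:
  assumes "\<forall>i<d. g i \<in> calG Mt \<nu> \<alpha> c"
  obtains P where
    "\<And>i k. i < d \<Longrightarrow> k < Mt \<Longrightarrow> binary_poly (P i k) \<and> degree (P i k) \<le> \<nu> \<and> poly (P i k) \<alpha> = g i k"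
proof -
  have ex: "\<exists>q. binary_poly q \<and> degree q \<le> \<nu> \<and> poly q \<alpha> = g i k" if "i < d" "k < Mt" for i k
  proof -
    have "g i k \<in> Gamma \<nu> \<alpha>"
      using assms that unfolding calG_def by blast
    then show ?thesis
      by (rule Gamma_imp_binary_poly) blast
  qed
  show thesis
    by (rule that[of "\<lambda>i k. SOME q. binary_poly q \<and> degree q \<le> \<nu> \<and> poly q \<alpha> = g i k"])
      (rule someI_ex[OF ex])
qed

theorem lemma7:
  fixes \<alpha> :: "'a::{field,finite}"
    and T \<nu> Mt d :: nat
    and c :: "nat \<Rightarrow> 'a"
    and g :: "nat \<Rightarrow> nat \<Rightarrow> 'a"
  assumes "card (UNIV :: 'a set) = 2 ^ T"
    and "Mt \<ge> 1"
    and "T > (\<nu> + 1) * Mt"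
    and "primitive_elem \<alpha>"
    and "\<forall>i<d. g i \<in> calG Mt \<nu> \<alpha> c"
    and "lin_indep_over {0, 1} Mt d (\<lambda>i. Phi \<nu> \<alpha> (g i))"
  shows "lin_indep_over UNIV Mt d g"
proof -
  note card = assms(1) and prim = assms(4)
  have "(\<nu> + 1) * 1 \<le> (\<nu> + 1) * Mt"
    using assms(2) by (rule mult_le_mono2)
  hence "\<nu> < T"
    using assms(3) by simp
  have c2: "(1::'a) + 1 = 0"
    using one_add_one_eq_zero_if_card_two_power[OF card] \<open>\<nu> < T\<close> by simp
  obtain P where P: "\<And>i k. i < d \<Longrightarrow> k < Mt \<Longrightarrow>
      binary_poly (P i k) \<and> degree (P i k) \<le> \<nu> \<and> poly (P i k) \<alpha> = g i k"
    using calG_binary_poly_representation[OF assms(5)] by blast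
  have "Phi \<nu> \<alpha> (g i) k = coeff (P i k) 0" if "i < d" "k < Mt" for i k
    using P[OF that] by (intro Phi_eq_coeff_0[OF c2 card prim \<open>\<nu> < T\<close>]) auto
  then have indep: "lin_indep_over {0,1} Mt d (\<lambda>i k. coeff (P i k) 0)"
    using assms(6) by (subst lin_indep_over_cong[where w="\<lambda>i. Phi \<nu> \<alpha> (g i)"]) simp_all
  have "d \<le> Mt"
    using P by (intro lin_indep_over_binary_le[OF c2 _ indep]) (auto simp: binary_poly_def)
  hence "d * \<nu> \<le> Mt * \<nu>"
    by (rule mult_le_mono1)
  moreover have "Mt * \<nu> < T"
    using assms(3) by (simp add: algebra_simps)
  ultimately have "d * \<nu> < T"
    by linarith
  have "lin_indep_over UNIV Mt d (\<lambda>i k. poly (P i k) \<alpha>)"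
    using P by (intro lin_indep_over_eval_binary_polys[OF c2 card prim _ \<open>d * \<nu> < T\<close> indep]) auto
  then show ?thesis
    by (subst lin_indep_over_cong[where w="\<lambda>i k. poly (P i k) \<alpha>"]) (simp_all add: P)
qed

end
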